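(* Let $n\ge2$, $p\in(0,1)$, let $X_1,\dots,X_{n-2}$ be i.i.d. with $\mathbb P(X_i=-1)=p$, $\mathbb P(X_i=1)=1-p$, and let $W_k=\sum_{i=1}^kX_i$ for $0\le k\le n-2$. Then $$\tilde T_n^p\stackrel{d}{=}\frac n2+\max_{0\le k\le n-2}W_k-\frac{W_{n-2}}{2}.$$
   Context: For $n\ge2$, $p\in(0,1)$, $\tilde\Omega_n^p$ is the probability space of strings $\omega\in\{0,1\}^n$ with $\omega_1=0$, $\omega_n=1$ and $\omega_2,\dots,\omega_{n-1}$ independent, each $1$ with probability $p$ and $0$ with probability $1-p$. One step of the evolution replaces simultaneously every occurrence of the consecutive substring "01" by "10"; $\tilde T_n^p(\omega)$ is the number of steps needed to reach a string of the form $1\cdots10\cdots0$. $\stackrel d=$ denotes equality in distribution. *)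

theory Defs
  imports "HOL-Probability.Probability"
begin

text \<open>Binary strings are lists of booleans: True = 1, False = 0.\<close>

text \<open>One step: simultaneously replace every occurrence of 01 by 10
  (occurrences of 01 never overlap, so a left-to-right scan is exact).\<close>
fun evol_step :: "bool list \<Rightarrow> bool list" where
  "evol_step (False # True # xs) = True # False # evol_step xs"
| "evol_step (x # xs) = x # evol_step xs"
| "evol_step [] = []"

definition is_sorted_str :: "bool list \<Rightarrow> bool" where
  "is_sorted_str w \<longleftrightarrow> (\<exists>a b. w = replicate a True @ replicate b False)"

definition steps_to_sort :: "bool list \<Rightarrow> nat" where
  "steps_to_sort w = (LEAST t. is_sorted_str ((evol_step ^^ t) w))"

fun bern_list :: "nat \<Rightarrow> real \<Rightarrow> bool list pmf" where
  "bern_list 0 p = return_pmf []"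
| "bern_list (Suc k) p =
     bind_pmf (bernoulli_pmf p) (\<lambda>b. map_pmf (\<lambda>bs. b # bs) (bern_list k p))"

text \<open>Law of \<open>\<tilde>T_n^p\<close>: \<open>\<omega>_1 = 0\<close>, \<open>\<omega>_n = 1\<close>, middle bits i.i.d. 1 w.p. p.\<close>
definition T_dist :: "nat \<Rightarrow> real \<Rightarrow> nat pmf" where
  "T_dist n p = map_pmf (\<lambda>mid. steps_to_sort (False # mid @ [True])) (bern_list (n - 2) p)"

definition walk :: "bool list \<Rightarrow> nat \<Rightarrow> real" where
  "walk bs k = sum_list (map (\<lambda>b. if b then -1 else 1) (take k bs))"

definition walk_dist :: "nat \<Rightarrow> real \<Rightarrow> real pmf" where
  "walk_dist n p = map_pmf
     (\<lambda>bs. real n / 2 + Max (walk bs ` {0..n-2}) - walk bs (n - 2) / 2)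
     (bern_list (n - 2) p)"

end

theory Submission
  imports Defs
begin

(* Proof idea.  The theorem holds pointwise, not only in distribution: for every
   middle string mid, the sorting time of 0 mid 1 equals
   n/2 + max_k W_k - W_{n-2}/2 for the walk W built from mid.

   1. For a string w and an offset c (c extra zeros imagined in front of w), the
      potential sort_time c w is the largest value of (#zeros left of x) +
      (#ones right of x) over all ones x of w having some zero to their left.
      One evolution step lowers sort_time 0 by exactly one (sort_time_step), and
      sort_time 0 w = 0 iff w is sorted, so steps_to_sort w = sort_time 0 w.
   2. For strings of the form mid @ [1] with a positive offset the potential has
      a closed form: c + #ones(mid) + max_walk mid, where max_walk mid is the
      maximum of the prefix sums of the +-1 walk of mid.
   3. Rewriting #ones(mid) through the endpoint W_{n-2} of the walk gives the
      formula of the theorem for every outcome, hence equality of the laws. *)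

abbreviation ones :: "bool list \<Rightarrow> nat" where
  "ones xs \<equiv> length (filter (\<lambda>a. a) xs)"

fun sort_time :: "nat \<Rightarrow> bool list \<Rightarrow> nat" where
  "sort_time c [] = 0"
| "sort_time c (False # xs) = sort_time (Suc c) xs"
| "sort_time c (True # xs) = max (if c > 0 then c + ones xs else 0) (sort_time c xs)"

lemma evol_step_ones_prefix:
  "evol_step (replicate k True @ ys) = replicate k True @ evol_step ys"
  by (induction k) auto

lemma ones_evol_step: "ones (evol_step w) = ones w"
  by (induction w rule: evol_step.induct) auto

lemma ones_prefix_decomp:
  "\<exists>k ys. w = replicate k True @ ys \<and> (ys = [] \<or> hd ys = False)"
proof (induction w)
  case Nil then show ?case by auto
next
  case (Cons a w)
  then obtain k ys where w: "w = replicate k True @ ys" "ys = [] \<or> hd ys = False"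
    by blast
  show ?case
  proof (cases a)
    case True
    then show ?thesis using w by (intro exI[of _ "Suc k"] exI[of _ ys]) auto
  next
    case False
    then show ?thesis by (intro exI[of _ 0] exI[of _ "a # w"]) auto
  qed
qed

lemma zero_block_decomp:
  assumes "ys = [] \<or> hd ys = False"
  obtains "ys = []"
  | k zs where "ys = False # replicate k True @ zs" "zs = [] \<or> hd zs = False"
proof (cases ys)
  case (Cons a r)
  with assms have "a = False" by simp
  moreover obtain k zs where "r = replicate k True @ zs" "zs = [] \<or> hd zs = False"
    using ones_prefix_decomp by blast
  ultimately show ?thesis using Cons that(2) by blast
qed (use that(1) in blast)

lemma sort_time_ones_prefix:
  "sort_time c (replicate k True @ ys) =
     (if k > 0 \<and> c > 0 then max (c + k - 1 + ones ys) (sort_time c ys) else sort_time c ys)"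
  by (induction k) auto

lemma sort_time_no_ones: "ones ys = 0 \<Longrightarrow> sort_time c ys = 0"
proof (induction ys arbitrary: c)
  case (Cons a ys) then show ?case by (cases a) auto
qed simp

text \<open>With a positive offset, the last one of \<open>ys\<close> already witnesses the bound
  \<open>c + ones ys - 1\<close>.\<close>
lemma sort_time_lower_bound:
  "c > 0 \<Longrightarrow> ones ys > 0 \<Longrightarrow> sort_time c ys \<ge> c + ones ys - 1"
proof (induction ys arbitrary: c)
  case Nil then show ?case by simp
next
  case (Cons a ys)
  then show ?case using Cons.IH[of "Suc c"] by (cases a) auto
qed

lemma sort_time_zero_head: "ones ys > 0 \<Longrightarrow> sort_time c (False # ys) \<ge> c + ones ys"
  using sort_time_lower_bound[of "Suc c" ys] by auto

text \<open>The step swaps the zero with the first one; the block loses its maximum by one,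
  while the tail \<open>zs\<close> decreases by induction.\<close>
lemma sort_time_step_block:
  assumes zs: "zs = [] \<or> hd zs = False"
    and IH: "sort_time (Suc c) (evol_step zs) = sort_time (Suc c) zs - 1"
  shows "sort_time c (evol_step (False # replicate (Suc k) True @ zs)) =
         sort_time c (False # replicate (Suc k) True @ zs) - 1"
proof -
  have tail_big: "sort_time (Suc c) zs \<ge> Suc c + ones zs" if "ones zs > 0"
  proof -
    from that zs obtain Y where "zs = False # Y" by (cases zs) auto
    then show ?thesis using sort_time_zero_head[of Y "Suc c"] that by simp
  qed
  have "evol_step (False # replicate (Suc k) True @ zs) =
        True # False # replicate k True @ evol_step zs"
    by (simp add: evol_step_ones_prefix)
  then show ?thesis
    using IH tail_big sort_time_no_ones[of zs "Suc c"]
    by (cases "ones zs = 0"; cases "c = 0"; cases "k = 0")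
       (auto simp: sort_time_ones_prefix ones_evol_step)
qed

lemma sort_time_step_zero_head:
  "ys = [] \<or> hd ys = False \<Longrightarrow> sort_time c (evol_step ys) = sort_time c ys - 1"
proof (induction "length ys" arbitrary: ys c rule: less_induct)
  case less
  from less.prems show ?case
  proof (cases rule: zero_block_decomp)
    case 1 then show ?thesis by simp
  next
    case (2 k zs)
    have IH: "sort_time (Suc c) (evol_step zs) = sort_time (Suc c) zs - 1"
      using less.hyps[of zs "Suc c"] 2 by simp
    show ?thesis
    proof (cases k)
      case 0
      then show ?thesis using 2 IH by (cases zs) auto
    next
      case (Suc j)
      then show ?thesis using 2 IH sort_time_step_block by simp
    qed
  qed
qed

text \<open>For an arbitrary string the leading block of ones is inert, so the decrease
  extends to offset zero.\<close>
lemma sort_time_step: "sort_time 0 (evol_step w) = sort_time 0 w - 1"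
proof -
  obtain k ys where w: "w = replicate k True @ ys" "ys = [] \<or> hd ys = False"
    using ones_prefix_decomp by blast
  show ?thesis
    using sort_time_step_zero_head[OF w(2), of 0]
    unfolding w by (simp add: evol_step_ones_prefix sort_time_ones_prefix)
qed

lemma sort_time_iterate: "sort_time 0 ((evol_step ^^ t) w) = sort_time 0 w - t"
  by (induction t) (auto simp: sort_time_step)

lemma is_sorted_str_iff: "is_sorted_str w \<longleftrightarrow> sort_time 0 w = 0"
proof
  assume "is_sorted_str w"
  then obtain a b where "w = replicate a True @ replicate b False"
    unfolding is_sorted_str_def by blast
  then show "sort_time 0 w = 0" by (simp add: sort_time_ones_prefix sort_time_no_ones)
next
  assume sorted: "sort_time 0 w = 0"
  obtain k ys where w: "w = replicate k True @ ys" "ys = [] \<or> hd ys = False"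
    using ones_prefix_decomp by blast
  have "sort_time 0 ys = 0" using sorted w by (simp add: sort_time_ones_prefix)
  then have "ones ys = 0"
    using w(2) sort_time_zero_head[of _ 0] by (cases ys) fastforce+
  then have "ys = replicate (length ys) False"
    by (induction ys) (auto split: if_splits)
  then show "is_sorted_str w" using w unfolding is_sorted_str_def by blast
qed

lemma steps_to_sort_eq: "steps_to_sort w = sort_time 0 w"
  unfolding steps_to_sort_def is_sorted_str_iff sort_time_iterate
  by (rule Least_equality) auto

fun max_walk :: "bool list \<Rightarrow> real" where
  "max_walk [] = 0"
| "max_walk (b # xs) = max 0 ((if b then -1 else 1) + max_walk xs)"

lemma max_walk_nonneg: "max_walk xs \<ge> 0"
  by (cases xs) auto

lemma sort_time_snoc_one:
  "c > 0 \<Longrightarrow> real (sort_time c (xs @ [True])) = real c + real (ones xs) + max_walk xs"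
proof (induction xs arbitrary: c)
  case Nil then show ?case by simp
next
  case (Cons b xs)
  show ?case
  proof (cases b)
    case True
    have "real (sort_time c (True # xs @ [True])) =
          max (real c + real (ones xs) + 1) (real c + real (ones xs) + max_walk xs)"
      using Cons by (simp add: of_nat_max)
    then show ?thesis using True by (simp add: max_def)
  next
    case False
    then show ?thesis using Cons.IH[of "Suc c"] max_walk_nonneg[of xs] by (auto simp: max_def)
  qed
qed

lemma walk_Cons: "walk (b # xs) (Suc k) = (if b then -1 else 1) + walk xs k"
  unfolding walk_def by simp

lemma walk_0: "walk xs 0 = 0"
  unfolding walk_def by simp

lemma max_walk_eq_Max: "max_walk xs = Max (walk xs ` {0..length xs})"
proof (induction xs)
  case Nil then show ?case by (simp add: walk_0)
next
  case (Cons b xs)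
  define s :: real where "s = (if b then -1 else 1)"
  have indices: "{0..length (b # xs)} = insert 0 (Suc ` {0..length xs})"
    by (auto simp: image_iff)
  have "walk (b # xs) ` {0..length (b # xs)} =
        insert 0 ((+) s ` walk xs ` {0..length xs})"
    unfolding indices image_insert image_image walk_0 walk_Cons s_def by simp
  moreover have "Max ((+) s ` walk xs ` {0..length xs}) = s + Max (walk xs ` {0..length xs})"
    by (rule mono_Max_commute[symmetric]) (auto simp: mono_def)
  ultimately show ?case using Cons by (simp add: s_def max.commute)
qed

lemma walk_length: "walk xs (length xs) = real (length xs) - 2 * real (ones xs)"
  unfolding walk_def by (induction xs) auto

lemma length_bern_list: "xs \<in> set_pmf (bern_list k p) \<Longrightarrow> length xs = k"
  by (induction k arbitrary: xs) auto

theorem lemma3p1: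
  fixes n :: nat and p :: real
  assumes "n \<ge> 2" and "0 < p" and "p < 1"
  shows "map_pmf real (T_dist n p) = walk_dist n p"
  unfolding T_dist_def walk_dist_def map_pmf_comp
proof (rule map_pmf_cong[OF refl])
  fix mid assume "mid \<in> set_pmf (bern_list (n - 2) p)"
  then have len: "length mid = n - 2" by (rule length_bern_list)
  have endpoint: "walk mid (n - 2) = real n - 2 - 2 * real (ones mid)"
    using walk_length[of mid] len assms(1) by (simp add: of_nat_diff)
  have maximum: "Max (walk mid ` {0..n - 2}) = max_walk mid"
    using max_walk_eq_Max[of mid] len by simp
  have "real (steps_to_sort (False # mid @ [True])) = real (sort_time 1 (mid @ [True]))"
    by (simp add: steps_to_sort_eq)
  also have "\<dots> = 1 + real (ones mid) + max_walk mid"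
    using sort_time_snoc_one[of 1 mid] by simp
  also have "\<dots> = real n / 2 + Max (walk mid ` {0..n - 2}) - walk mid (n - 2) / 2"
    unfolding endpoint maximum by (simp add: field_simps)
  finally show "real (steps_to_sort (False # mid @ [True])) =
     real n / 2 + Max (walk mid ` {0..n - 2}) - walk mid (n - 2) / 2" .
qed

end
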